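(* Let $I\subset S=K[x_1,\dots,x_t]$ be a nonzero proper monomial ideal and let $f\in I$ be a homogeneous element with $\deg f=\alpha(I)$ such that $v(I^{n+1}:f^n)=\alpha(I)-1$ for all sufficiently large $n$. Then $v(I^{n+1})=(n+1)\alpha(I)-1$ for all sufficiently large $n$.
   Context: $K$ is a field and $S$ is standard graded. For a proper graded ideal $J$, the $v$-number is $v(J)=\min\{k\ge 0 : \exists g\in S_k,\ \mathcal P\in\operatorname{Ass}(S/J) \text{ with } (J:g)=\mathcal P\}$. $\alpha(I)=\min\{\deg g : g\in I\setminus\{0\} \text{ homogeneous}\}$. *)

theory Defs
  imports "HOL-Library.Poly_Mapping"
begin

text \<open>Polynomial ring S = K[x_v : v in 'v] for a finite type of variables 'v,
  realised as finitely supported maps from monomials (exponent vectors) to coefficients.\<close>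

type_synonym ('v, 'a) mpoly = "('v \<Rightarrow>\<^sub>0 nat) \<Rightarrow>\<^sub>0 'a"

definition mon_deg :: "('v \<Rightarrow>\<^sub>0 nat) \<Rightarrow> nat" where
  "mon_deg m = (\<Sum>i\<in>Poly_Mapping.keys m. Poly_Mapping.lookup m i)"

definition monomial_poly :: "('v \<Rightarrow>\<^sub>0 nat) \<Rightarrow> ('v, 'a::field) mpoly" where
  "monomial_poly m = Poly_Mapping.single m 1"

text \<open>g is an element of S_k (homogeneous of degree k; 0 belongs to every S_k).\<close>
definition homog :: "nat \<Rightarrow> ('v, 'a::field) mpoly \<Rightarrow> bool" where
  "homog k g \<longleftrightarrow> (\<forall>m\<in>Poly_Mapping.keys g. mon_deg m = k)"

definition is_ideal :: "('v, 'a::field) mpoly set \<Rightarrow> bool" where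
  "is_ideal I \<longleftrightarrow> 0 \<in> I \<and> (\<forall>a\<in>I. \<forall>b\<in>I. a + b \<in> I) \<and> (\<forall>r. \<forall>a\<in>I. r * a \<in> I)"

definition ideal_gen :: "('v, 'a::field) mpoly set \<Rightarrow> ('v, 'a) mpoly set" where
  "ideal_gen G = \<Inter>{I. is_ideal I \<and> G \<subseteq> I}"

definition prime_ideal :: "('v, 'a::field) mpoly set \<Rightarrow> bool" where
  "prime_ideal P \<longleftrightarrow> is_ideal P \<and> P \<noteq> UNIV \<and> (\<forall>a b. a * b \<in> P \<longrightarrow> a \<in> P \<or> b \<in> P)"

definition monomial_ideal :: "('v, 'a::field) mpoly set \<Rightarrow> bool" where
  "monomial_ideal I \<longleftrightarrow> (\<exists>M. I = ideal_gen (monomial_poly ` M))"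

definition colon :: "('v, 'a::field) mpoly set \<Rightarrow> ('v, 'a) mpoly \<Rightarrow> ('v, 'a) mpoly set" where
  "colon J g = {h. h * g \<in> J}"

fun ideal_pow :: "('v, 'a::field) mpoly set \<Rightarrow> nat \<Rightarrow> ('v, 'a) mpoly set" where
  "ideal_pow I 0 = UNIV"
| "ideal_pow I (Suc n) = ideal_gen {a * b | a b. a \<in> ideal_pow I n \<and> b \<in> I}"

definition Ass :: "('v, 'a::field) mpoly set \<Rightarrow> ('v, 'a) mpoly set set" where
  "Ass J = {P. prime_ideal P \<and> (\<exists>g. colon J g = P)}"

definition v_number :: "('v, 'a::field) mpoly set \<Rightarrow> nat" where
  "v_number J = (LEAST k. \<exists>g P. homog k g \<and> P \<in> Ass J \<and> colon J g = P)"

definition alpha :: "('v, 'a::field) mpoly set \<Rightarrow> nat" where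
  "alpha I = (LEAST d. \<exists>g\<in>I. g \<noteq> 0 \<and> homog d g)"

end

theory Submission
  imports Defs
begin

(* Write J = I^(n+1) and a = alpha(I).  Powers of a monomial ideal are monomial, and every
   nonzero homogeneous element of J has degree at least (n+1)a.

   Lower bound: if (J : g) = P is prime, then P contains a monomial of J and hence a variable
   x_i, so x_i g is a nonzero element of J and deg g + 1 >= (n+1)a.

   Upper bound: a witness g of degree a - 1 for v(J : f^n) gives (J : f^n g) = P with
   deg (f^n g) = (n+1)a - 1.

   Since LEAST over an empty predicate is junk, the hypothesis v(J : f^n) = a - 1 is only
   usable once we know that the v-number of J : f^n is attained.  This holds because for a
   monomial ideal J and z not in J some monomial multiple z x^c has (J : z x^c) generated by
   variables.  Choose the shift c so that the terms of z x^c outside J behave uniformly under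
   further shifts (minimise their number); then shift one such monomial x^d until the set of
   variables x_i with x^d x_i in J is maximal. *)

section \<open>Exponent vectors\<close>

lemma mon_deg_eq_sum_UNIV:
  "mon_deg (m :: 'v::finite \<Rightarrow>\<^sub>0 nat) = (\<Sum>i\<in>UNIV. Poly_Mapping.lookup m i)"
  unfolding mon_deg_def by (rule sum.mono_neutral_left) (auto simp: in_keys_iff)

lemma mon_deg_add: "mon_deg (a + b :: 'v::finite \<Rightarrow>\<^sub>0 nat) = mon_deg a + mon_deg b"
  by (simp add: mon_deg_eq_sum_UNIV lookup_add sum.distrib)

lemma mon_deg_single [simp]: "mon_deg (Poly_Mapping.single i k) = k"
  by (simp add: mon_deg_def)

lemma mon_deg_eq_0_iff: "mon_deg (m :: 'v \<Rightarrow>\<^sub>0 nat) = 0 \<longleftrightarrow> m = 0"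
proof -
  have "mon_deg m = 0 \<longleftrightarrow> (\<forall>i\<in>Poly_Mapping.keys m. Poly_Mapping.lookup m i = 0)"
    by (simp add: mon_deg_def)
  also have "\<dots> \<longleftrightarrow> Poly_Mapping.keys m = {}"
    by (metis in_keys_iff all_not_in_conv)
  finally show ?thesis by simp
qed

lemma single_add_diff_eq:
  "0 < Poly_Mapping.lookup (b :: 'v \<Rightarrow>\<^sub>0 nat) i
    \<Longrightarrow> Poly_Mapping.single i 1 + (b - Poly_Mapping.single i 1) = b"
  by (rule poly_mapping_eqI) (auto simp: lookup_add lookup_minus lookup_single when_def)

lemma nonzero_expsE:
  assumes "(b :: 'v \<Rightarrow>\<^sub>0 nat) \<noteq> 0"
  obtains i b' where "b = Poly_Mapping.single i 1 + b'"
proof -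
  obtain i where "i \<in> Poly_Mapping.keys b" using assms by (metis keys_eq_empty all_not_in_conv)
  then have "b = Poly_Mapping.single i 1 + (b - Poly_Mapping.single i 1)"
    by (intro single_add_diff_eq[symmetric]) (simp add: in_keys_iff)
  then show thesis by (rule that)
qed

definition upward_closed :: "'k::plus set \<Rightarrow> bool" where
  "upward_closed E \<longleftrightarrow> (\<forall>a c. a \<in> E \<longrightarrow> a + c \<in> E)"

lemma upward_closedD: "upward_closed E \<Longrightarrow> a \<in> E \<Longrightarrow> a + c \<in> E"
  unfolding upward_closed_def by blast

(* Exponents of the monomials in the ideal generated by the variables x_i, i \<in> A. *)
definition var_exps :: "'v set \<Rightarrow> ('v \<Rightarrow>\<^sub>0 nat) set" where
  "var_exps A = {b. \<exists>i\<in>A. 0 < Poly_Mapping.lookup b i}"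

lemma mem_var_exps_iff: "b \<in> var_exps A \<longleftrightarrow> (\<exists>i\<in>A. 0 < Poly_Mapping.lookup b i)"
  by (simp add: var_exps_def)

section \<open>Multivariate polynomials\<close>

lemma lookup_mult_at_unique_sum:
  fixes p q :: "'k::monoid_add \<Rightarrow>\<^sub>0 'a::semiring_0"
  assumes unique: "\<And>a b. a \<in> Poly_Mapping.keys p \<Longrightarrow> b \<in> Poly_Mapping.keys q \<Longrightarrow>
    a0 + b0 = a + b \<Longrightarrow> a = a0 \<and> b = b0"
  shows "Poly_Mapping.lookup (p * q) (a0 + b0) = Poly_Mapping.lookup p a0 * Poly_Mapping.lookup q b0"
proof -
  have column: "Poly_Mapping.lookup p a * (\<Sum>b. Poly_Mapping.lookup q b when a0 + b0 = a + b)
      = (Poly_Mapping.lookup p a0 * Poly_Mapping.lookup q b0 when a = a0)" for a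
  proof (cases "a \<in> Poly_Mapping.keys p")
    case True
    have "(Poly_Mapping.lookup q b when a0 + b0 = a + b)
        = (Poly_Mapping.lookup q b0 when a = a0 when b = b0)" for b
    proof (cases "b \<in> Poly_Mapping.keys q \<and> a0 + b0 = a + b")
      case True
      then have "a = a0 \<and> b = b0" using unique[OF \<open>a \<in> Poly_Mapping.keys p\<close>] by blast
      then show ?thesis by simp
    next
      case False
      then show ?thesis by (cases "a = a0 \<and> b = b0") (auto simp: in_keys_iff)
    qed
    then show ?thesis by (simp add: when_def)
  next
    case False
    then show ?thesis by (cases "a = a0") (simp_all add: in_keys_iff)
  qed
  show ?thesis by (simp add: lookup_mult column)
qed

(* The library's domain instance for poly_mapping needs linearly ordered keys; exponent vectors
   over an unordered finite type are therefore embedded into nat \<Rightarrow>\<^sub>0 nat. *)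

lemma mult_ne_zero_if_ordered_embedding:
  fixes \<psi> :: "'k::monoid_add \<Rightarrow> 'l::linordered_cancel_ab_semigroup_add"
    and p q :: "'k \<Rightarrow>\<^sub>0 'a::semiring_no_zero_divisors"
  assumes "inj \<psi>" and \<psi>_add: "\<And>a b. \<psi> (a + b) = \<psi> a + \<psi> b"
    and "p \<noteq> 0" and "q \<noteq> 0"
  shows "p * q \<noteq> 0"
proof -
  have top_key: "\<exists>a0\<in>Poly_Mapping.keys r. \<forall>a\<in>Poly_Mapping.keys r. \<psi> a \<le> \<psi> a0"
    if "r \<noteq> 0" for r :: "'k \<Rightarrow>\<^sub>0 'a"
  proof -
    have fin: "finite (\<psi> ` Poly_Mapping.keys r)" and ne: "\<psi> ` Poly_Mapping.keys r \<noteq> {}"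
      using that by auto
    obtain a0 where "a0 \<in> Poly_Mapping.keys r" "Max (\<psi> ` Poly_Mapping.keys r) = \<psi> a0"
      using Max_in[OF fin ne] by (rule imageE)
    then show ?thesis using Max_ge[OF fin] by (metis imageI)
  qed
  obtain a0 where a0: "a0 \<in> Poly_Mapping.keys p" "\<And>a. a \<in> Poly_Mapping.keys p \<Longrightarrow> \<psi> a \<le> \<psi> a0"
    using top_key \<open>p \<noteq> 0\<close> by blast
  obtain b0 where b0: "b0 \<in> Poly_Mapping.keys q" "\<And>b. b \<in> Poly_Mapping.keys q \<Longrightarrow> \<psi> b \<le> \<psi> b0"
    using top_key \<open>q \<noteq> 0\<close> by blast
  have "a = a0 \<and> b = b0"
    if "a \<in> Poly_Mapping.keys p" "b \<in> Poly_Mapping.keys q" "a0 + b0 = a + b" for a b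
  proof -
    have sum: "\<psi> a + \<psi> b = \<psi> a0 + \<psi> b0" by (simp only: \<psi>_add[symmetric] that(3))
    have le: "\<psi> a \<le> \<psi> a0" "\<psi> b \<le> \<psi> b0" using a0(2) b0(2) that by auto
    have "\<psi> a = \<psi> a0"
    proof (rule ccontr)
      assume "\<psi> a \<noteq> \<psi> a0"
      then have "\<psi> a + \<psi> b < \<psi> a0 + \<psi> b0" using le by (intro add_less_le_mono) auto
      then show False using sum by simp
    qed
    moreover have "\<psi> b = \<psi> b0" using sum \<open>\<psi> a = \<psi> a0\<close> by simp
    ultimately show ?thesis using \<open>inj \<psi>\<close> by (simp add: inj_eq)
  qed
  then have "Poly_Mapping.lookup (p * q) (a0 + b0) = Poly_Mapping.lookup p a0 * Poly_Mapping.lookup q b0"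
    by (rule lookup_mult_at_unique_sum)
  then show ?thesis using a0(1) b0(1) by (auto simp: in_keys_iff)
qed

lemma mpoly_mult_ne_zero:
  fixes p q :: "('v::finite, 'a::field) mpoly"
  assumes "p \<noteq> 0" and "q \<noteq> 0"
  shows "p * q \<noteq> 0"
proof -
  obtain h :: "'v \<Rightarrow> nat" where "inj h"
    using finite_imp_inj_to_nat_seg[of "UNIV :: 'v set"] by auto
  define \<psi> :: "('v \<Rightarrow>\<^sub>0 nat) \<Rightarrow> (nat \<Rightarrow>\<^sub>0 nat)"
    where "\<psi> m = (\<Sum>i\<in>UNIV. Poly_Mapping.single (h i) (Poly_Mapping.lookup m i))" for m
  have "Poly_Mapping.lookup (\<psi> m) (h j) = Poly_Mapping.lookup m j" for m j
    using \<open>inj h\<close> by (simp add: \<psi>_def lookup_sum lookup_single inj_eq when_def)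
  then have "inj \<psi>" by (metis injI poly_mapping_eqI)
  moreover have "\<psi> (a + b) = \<psi> a + \<psi> b" for a b
    by (simp add: \<psi>_def lookup_add single_add sum.distrib)
  ultimately show ?thesis using assms by (rule mult_ne_zero_if_ordered_embedding)
qed

lemma mpoly_pow_ne_zero: "p \<noteq> 0 \<Longrightarrow> p ^ n \<noteq> (0 :: ('v::finite, 'a::field) mpoly)"
  by (induction n) (simp_all add: mpoly_mult_ne_zero)

lemma monomial_poly_ne_zero [simp]: "monomial_poly c \<noteq> 0"
  by (metis monomial_poly_def keys_single keys_eq_empty one_neq_zero singleton_insert_inj_eq
      insert_not_empty)

lemma keys_monomial_poly [simp]: "Poly_Mapping.keys (monomial_poly c :: ('v, 'a::field) mpoly) = {c}"
  by (simp add: monomial_poly_def)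

lemma monomial_poly_add: "monomial_poly (a + b) = monomial_poly a * monomial_poly b"
  by (simp add: monomial_poly_def mult_single)

lemma lookup_mult_monomial_poly:
  fixes p :: "('v, 'a::field) mpoly"
  shows "Poly_Mapping.lookup (p * monomial_poly c) (a + c) = Poly_Mapping.lookup p a"
proof -
  have "(\<Sum>b. (1::'a) when c = b when a + c = l + b) = (\<Sum>b. (1 when l = a) when c = b)" for l
    by (rule Sum_any.cong) (auto simp: when_def)
  then show ?thesis by (simp add: monomial_poly_def lookup_mult lookup_single when_mult mult_when)
qed

lemma keys_mult_monomial_poly:
  fixes p :: "('v, 'a::field) mpoly"
  shows "Poly_Mapping.keys (p * monomial_poly c) = (\<lambda>a. a + c) ` Poly_Mapping.keys p"
proof
  show "Poly_Mapping.keys (p * monomial_poly c) \<subseteq> (\<lambda>a. a + c) ` Poly_Mapping.keys p"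
    using keys_mult[of p "monomial_poly c"] by auto
  show "(\<lambda>a. a + c) ` Poly_Mapping.keys p \<subseteq> Poly_Mapping.keys (p * monomial_poly c)"
    by (auto simp: in_keys_iff lookup_mult_monomial_poly)
qed

lemma homog_monomial_poly: "homog (mon_deg c) (monomial_poly c)"
  by (simp add: homog_def)

lemma homog_mult:
  fixes p q :: "('v::finite, 'a::field) mpoly"
  assumes "homog a p" and "homog b q"
  shows "homog (a + b) (p * q)"
  unfolding homog_def
proof
  fix m assume "m \<in> Poly_Mapping.keys (p * q)"
  then obtain x y where "x \<in> Poly_Mapping.keys p" "y \<in> Poly_Mapping.keys q" "m = x + y"
    using keys_mult[of p q] by blast
  then show "mon_deg m = a + b" using assms by (simp add: homog_def mon_deg_add)
qed

lemma homog_pow: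
  fixes p :: "('v::finite, 'a::field) mpoly"
  assumes "homog a p"
  shows "homog (n * a) (p ^ n)"
proof (induction n)
  case 0
  then show ?case by (simp add: homog_def mon_deg_def)
next
  case (Suc n)
  then show ?case using homog_mult[OF assms Suc] by (simp add: add.commute)
qed

lemma alpha_le: "g \<in> I \<Longrightarrow> g \<noteq> 0 \<Longrightarrow> homog d g \<Longrightarrow> alpha I \<le> d"
  unfolding alpha_def by (blast intro: Least_le)

definition restrict_keys :: "'k set \<Rightarrow> ('k \<Rightarrow>\<^sub>0 'b::zero) \<Rightarrow> 'k \<Rightarrow>\<^sub>0 'b" where
  "restrict_keys A p = Abs_poly_mapping (\<lambda>k. if k \<in> A then Poly_Mapping.lookup p k else 0)"

lemma lookup_restrict_keys:
  "Poly_Mapping.lookup (restrict_keys A p) k = (if k \<in> A then Poly_Mapping.lookup p k else 0)"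
proof -
  have "finite {k. (if k \<in> A then Poly_Mapping.lookup p k else 0) \<noteq> 0}"
    by (rule finite_subset[of _ "Poly_Mapping.keys p"]) (auto simp: in_keys_iff split: if_splits)
  then show ?thesis by (simp add: restrict_keys_def)
qed

lemma keys_restrict_keys: "Poly_Mapping.keys (restrict_keys A p) = Poly_Mapping.keys p \<inter> A"
  by (auto simp: in_keys_iff lookup_restrict_keys split: if_splits)

lemma restrict_keys_compl:
  "restrict_keys (- A) p = (p :: 'k \<Rightarrow>\<^sub>0 'b::ab_group_add) - restrict_keys A p"
  by (rule poly_mapping_eqI) (simp add: lookup_minus lookup_restrict_keys)

section \<open>Ideals and colon ideals\<close>

lemma is_ideal_ideal_gen: "is_ideal (ideal_gen G)"
  unfolding is_ideal_def ideal_gen_def by auto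

lemma subset_ideal_gen: "G \<subseteq> ideal_gen G"
  unfolding ideal_gen_def by auto

lemma ideal_gen_least: "is_ideal J \<Longrightarrow> G \<subseteq> J \<Longrightarrow> ideal_gen G \<subseteq> J"
  unfolding ideal_gen_def by auto

lemma is_ideal_mult_left: "is_ideal J \<Longrightarrow> a \<in> J \<Longrightarrow> r * a \<in> J"
  unfolding is_ideal_def by blast

lemma is_ideal_mult_right: "is_ideal J \<Longrightarrow> a \<in> J \<Longrightarrow> a * r \<in> J"
  using is_ideal_mult_left[of J a r] by (simp add: mult.commute)

lemma is_ideal_diff:
  assumes "is_ideal J" and "a \<in> J" and "b \<in> J"
  shows "a - b \<in> J"
proof -
  have "a + (- 1) * b \<in> J"
    using assms is_ideal_mult_left[OF assms(1,3)] unfolding is_ideal_def by blast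
  then show ?thesis by simp
qed

lemma is_ideal_sum: "is_ideal J \<Longrightarrow> (\<And>x. x \<in> A \<Longrightarrow> f x \<in> J) \<Longrightarrow> sum f A \<in> J"
  by (induction A rule: infinite_finite_induct) (auto simp: is_ideal_def)

lemma subset_colon: "is_ideal J \<Longrightarrow> J \<subseteq> colon J g"
  by (auto simp: colon_def is_ideal_mult_right)

lemma colon_colon: "colon (colon J a) b = colon J (a * b)"
  by (auto simp: colon_def ac_simps)

lemma colon_cong:
  assumes "is_ideal J" and "w - w' \<in> J"
  shows "colon J w = colon J w'"
proof -
  have "p * w \<in> J \<longleftrightarrow> p * w' \<in> J" for p
  proof -
    have d: "p * w - p * w' \<in> J"
      using is_ideal_mult_left[OF assms] by (simp add: right_diff_distrib)
    show ?thesis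
    proof
      assume "p * w \<in> J"
      from is_ideal_diff[OF assms(1) this d] show "p * w' \<in> J" by simp
    next
      assume "p * w' \<in> J"
      with d assms(1) have "p * w' + (p * w - p * w') \<in> J" unfolding is_ideal_def by blast
      then show "p * w \<in> J" by simp
    qed
  qed
  then show ?thesis by (auto simp: colon_def)
qed

section \<open>Monomial ideals\<close>

definition supported_polys :: "('v \<Rightarrow>\<^sub>0 nat) set \<Rightarrow> ('v, 'a::field) mpoly set" where
  "supported_polys E = {p. Poly_Mapping.keys p \<subseteq> E}"

lemma zero_in_supported_polys [simp]: "0 \<in> supported_polys E"
  by (simp add: supported_polys_def)

lemma monomial_poly_in_supported_polys_iff [simp]:
  "monomial_poly c \<in> supported_polys E \<longleftrightarrow> c \<in> E"
  by (simp add: supported_polys_def)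

lemma add_in_supported_polys:
  "p \<in> supported_polys E \<Longrightarrow> q \<in> supported_polys E \<Longrightarrow> p + q \<in> supported_polys E"
  using keys_add[of p q] by (auto simp: supported_polys_def)

lemma supported_polys_diff:
  "p \<in> supported_polys E \<Longrightarrow> q \<in> supported_polys E \<Longrightarrow> p - q \<in> supported_polys E"
  using keys_diff[of p q] by (auto simp: supported_polys_def)

lemma mult_in_supported_polys_sumset:
  assumes "p \<in> supported_polys A" and "q \<in> supported_polys B"
  shows "p * q \<in> supported_polys {a + b | a b. a \<in> A \<and> b \<in> B}"
  using keys_mult[of p q] assms unfolding supported_polys_def by blast

lemma mult_in_supported_polys:
  assumes "upward_closed E" and "p \<in> supported_polys E"
  shows "r * p \<in> supported_polys E"
proof -
  have "r * p \<in> supported_polys {a + b | a b. a \<in> UNIV \<and> b \<in> E}"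
    using assms(2) by (intro mult_in_supported_polys_sumset) (auto simp: supported_polys_def)
  moreover have "a + b \<in> E" if "b \<in> E" for a b
    using upward_closedD[OF assms(1) that, of a] by (simp add: add.commute)
  then have "{a + b | a b. a \<in> UNIV \<and> b \<in> E} \<subseteq> E" by blast
  ultimately show ?thesis by (auto simp: supported_polys_def)
qed

lemma is_ideal_supported_polys: "upward_closed E \<Longrightarrow> is_ideal (supported_polys E)"
  unfolding is_ideal_def using add_in_supported_polys mult_in_supported_polys by auto

lemma homog_supported_polysE:
  assumes "p \<in> supported_polys E" and "p \<noteq> 0" and "homog d p"
  obtains a where "a \<in> E" and "mon_deg a = d"
proof -
  obtain a where a: "a \<in> Poly_Mapping.keys p" using \<open>p \<noteq> 0\<close> by (metis keys_eq_empty all_not_in_conv)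
  show thesis
  proof (rule that)
    show "a \<in> E" using a assms(1) by (auto simp: supported_polys_def)
    show "mon_deg a = d" using a assms(3) by (simp add: homog_def)
  qed
qed

lemma alpha_le_mon_deg:
  "a \<in> E \<Longrightarrow> alpha (supported_polys E :: ('v::finite, 'a::field) mpoly set) \<le> mon_deg a"
  using alpha_le[of "monomial_poly a" "supported_polys E" "mon_deg a"] homog_monomial_poly[of a]
  by simp

lemma homog_supported_polys_degree_pos:
  assumes "upward_closed E" and "supported_polys E \<noteq> (UNIV :: ('v::finite, 'a::field) mpoly set)"
    and "p \<in> supported_polys E" and "p \<noteq> 0" and "homog d p"
  shows "0 < d"
proof (rule ccontr)
  assume "\<not> 0 < d"
  obtain a where "a \<in> E" and "mon_deg a = d"
    using assms(3-5) by (rule homog_supported_polysE)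
  then have "0 \<in> E" using \<open>\<not> 0 < d\<close> by (simp add: mon_deg_eq_0_iff)
  then have "E = UNIV" using upward_closedD[OF assms(1), of 0] by auto
  then show False using assms(2) by (simp add: supported_polys_def)
qed

lemma supported_polys_subset_ideal:
  fixes J :: "('v, 'a::field) mpoly set"
  assumes "is_ideal J" and "\<And>c. c \<in> E \<Longrightarrow> monomial_poly c \<in> J"
  shows "supported_polys E \<subseteq> J"
proof
  fix p :: "('v, 'a) mpoly" assume p: "p \<in> supported_polys E"
  let ?term = "\<lambda>c. Poly_Mapping.single c (Poly_Mapping.lookup p c)"
  have "?term c = Poly_Mapping.single 0 (Poly_Mapping.lookup p c) * monomial_poly c" for c
    by (simp add: monomial_poly_def mult_single)
  then have "(\<Sum>c\<in>Poly_Mapping.keys p. ?term c) \<in> J"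
    using p assms by (auto simp: supported_polys_def intro!: is_ideal_sum is_ideal_mult_left)
  moreover have "(\<Sum>c\<in>Poly_Mapping.keys p. ?term c) = p"
    by (rule poly_mapping_eqI) (auto simp: lookup_sum lookup_single when_def in_keys_iff)
  ultimately show "p \<in> J" by simp
qed

lemma ideal_gen_eq_supported_polys:
  assumes "upward_closed E" and "G \<subseteq> supported_polys E"
    and "\<And>c. c \<in> E \<Longrightarrow> monomial_poly c \<in> ideal_gen G"
  shows "ideal_gen G = supported_polys E"
  using assms
  by (intro subset_antisym ideal_gen_least is_ideal_supported_polys
      supported_polys_subset_ideal is_ideal_ideal_gen)

lemma upward_closed_multiples:
  fixes M :: "'k::semigroup_add set"
  shows "upward_closed {m + d | m d. m \<in> M}"
proof (unfold upward_closed_def, intro allI impI)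
  fix a c assume "a \<in> {m + d | m d. m \<in> M}"
  then obtain m d where "a + c = m + (d + c)" "m \<in> M" by (auto simp: add.assoc)
  then show "a + c \<in> {m + d | m d. m \<in> M}" by blast
qed

lemma ideal_gen_monomials:
  "ideal_gen (monomial_poly ` M) = (supported_polys {m + d | m d. m \<in> M} :: ('v, 'a::field) mpoly set)"
proof (rule ideal_gen_eq_supported_polys[OF upward_closed_multiples])
  show "monomial_poly ` M \<subseteq> (supported_polys {m + d | m d. m \<in> M} :: ('v, 'a) mpoly set)"
    by (auto simp: supported_polys_def) (metis add_0_right)
  fix c assume "c \<in> {m + d | m d. m \<in> M}"
  then obtain m d where "c = m + d" "m \<in> M" by blast
  then show "monomial_poly c \<in> ideal_gen (monomial_poly ` M :: ('v, 'a) mpoly set)"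
    using is_ideal_mult_right[OF is_ideal_ideal_gen subset_ideal_gen[THEN subsetD], OF imageI]
    by (simp add: monomial_poly_add)
qed

lemma monomial_ideal_supported_polysE:
  assumes "monomial_ideal I"
  obtains E where "upward_closed E" and "I = supported_polys E"
proof -
  obtain M where I: "I = ideal_gen (monomial_poly ` M)"
    using assms unfolding monomial_ideal_def by blast
  show thesis by (rule that[OF upward_closed_multiples[of M]]) (simp add: I ideal_gen_monomials)
qed

fun exps_pow :: "('v \<Rightarrow>\<^sub>0 nat) set \<Rightarrow> nat \<Rightarrow> ('v \<Rightarrow>\<^sub>0 nat) set" where
  "exps_pow E 0 = UNIV"
| "exps_pow E (Suc n) = {a + b | a b. a \<in> exps_pow E n \<and> b \<in> E}"

lemma upward_closed_exps_pow:
  assumes "upward_closed E"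
  shows "upward_closed (exps_pow E n)"
proof (cases n)
  case 0
  then show ?thesis by (simp add: upward_closed_def)
next
  case (Suc m)
  show ?thesis unfolding Suc upward_closed_def
  proof (intro allI impI)
    fix x c assume "x \<in> exps_pow E (Suc m)"
    then obtain a b where "x + c = a + (b + c)" "a \<in> exps_pow E m" "b \<in> E"
      by (auto simp: add.assoc)
    then show "x + c \<in> exps_pow E (Suc m)" using upward_closedD[OF assms] by auto
  qed
qed

lemma ideal_pow_supported_polys:
  assumes "upward_closed E"
  shows "ideal_pow (supported_polys E) n
    = (supported_polys (exps_pow E n) :: ('v, 'a::field) mpoly set)"
proof (induction n)
  case 0
  then show ?case by (simp add: supported_polys_def)
next
  case (Suc n)
  let ?G = "{a * b | a b. a \<in> ideal_pow (supported_polys E) n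
    \<and> b \<in> (supported_polys E :: ('v, 'a) mpoly set)}"
  have "ideal_gen ?G = supported_polys (exps_pow E (Suc n))"
  proof (rule ideal_gen_eq_supported_polys[OF upward_closed_exps_pow[OF assms]])
    show "?G \<subseteq> supported_polys (exps_pow E (Suc n))"
    proof clarify
      fix a b :: "('v, 'a) mpoly"
      assume "a \<in> ideal_pow (supported_polys E) n" and "b \<in> supported_polys E"
      then show "a * b \<in> supported_polys (exps_pow E (Suc n))"
        using mult_in_supported_polys_sumset[of a "exps_pow E n" b E] Suc by simp
    qed
    fix c assume "c \<in> exps_pow E (Suc n)"
    then obtain a b where "c = a + b" "a \<in> exps_pow E n" "b \<in> E"
      by (simp only: exps_pow.simps) blast
    then have "(monomial_poly c :: ('v, 'a) mpoly) = monomial_poly a * monomial_poly b"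
      "(monomial_poly a :: ('v, 'a) mpoly) \<in> ideal_pow (supported_polys E) n"
      "(monomial_poly b :: ('v, 'a) mpoly) \<in> supported_polys E"
      unfolding Suc by (simp_all add: monomial_poly_add)
    then have "monomial_poly c \<in> ?G" by blast
    then show "monomial_poly c \<in> ideal_gen ?G" by (rule subsetD[OF subset_ideal_gen])
  qed
  then show ?case by (simp only: ideal_pow.simps)
qed

lemma mon_deg_exps_pow:
  assumes "\<And>b. b \<in> E \<Longrightarrow> d \<le> mon_deg (b :: 'v::finite \<Rightarrow>\<^sub>0 nat)" and "a \<in> exps_pow E n"
  shows "n * d \<le> mon_deg a"
  using assms(2)
proof (induction n arbitrary: a)
  case 0
  then show ?case by simp
next
  case (Suc n)
  then obtain x y where "a = x + y" "x \<in> exps_pow E n" "y \<in> E"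
    by (simp only: exps_pow.simps) blast
  then show ?case using Suc.IH[of x] assms(1)[of y] by (simp add: mon_deg_add)
qed

lemma exps_pow_nonempty: "E \<noteq> {} \<Longrightarrow> exps_pow E n \<noteq> {}"
  by (induction n) auto

section \<open>Monomial primes and associated primes\<close>

lemma restrict_keys_in_supported_polys: "restrict_keys E p \<in> supported_polys E"
  by (simp add: supported_polys_def keys_restrict_keys)

lemma restrict_keys_compl_eq_0_iff: "restrict_keys (- E) p = 0 \<longleftrightarrow> p \<in> supported_polys E"
proof -
  have "restrict_keys (- E) p = 0 \<longleftrightarrow> Poly_Mapping.keys (restrict_keys (- E) p) = {}"
    by (simp only: keys_eq_empty)
  then show ?thesis by (auto simp: keys_restrict_keys supported_polys_def)
qed

lemma mult_in_supported_polys_iff: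
  fixes p w :: "('v::finite, 'a::field) mpoly"
  assumes "w \<noteq> 0"
    and shift: "\<And>b k. k \<in> Poly_Mapping.keys w \<Longrightarrow> b + k \<in> E \<longleftrightarrow> b \<in> F"
  shows "p * w \<in> supported_polys E \<longleftrightarrow> p \<in> supported_polys F"
proof
  have suff: "q * w \<in> supported_polys E" if q: "q \<in> supported_polys F" for q
  proof -
    have "x \<in> E" if x: "x \<in> Poly_Mapping.keys (q * w)" for x
    proof -
      obtain b k where bk: "x = b + k" "b \<in> Poly_Mapping.keys q" "k \<in> Poly_Mapping.keys w"
        using keys_mult[of q w] x by blast
      then have "b \<in> F" using q by (auto simp: supported_polys_def)
      then show ?thesis using shift[OF bk(3)] bk(1) by simp
    qed
    then show ?thesis by (auto simp: supported_polys_def)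
  qed
  show "p \<in> supported_polys F \<Longrightarrow> p * w \<in> supported_polys E" by (rule suff)
  assume pw: "p * w \<in> supported_polys E"
  define p' where "p' = restrict_keys (- F) p"
  have "p' * w = p * w - restrict_keys F p * w"
    by (simp add: p'_def restrict_keys_compl left_diff_distrib)
  then have p'w: "p' * w \<in> supported_polys E"
    using supported_polys_diff[OF pw suff[OF restrict_keys_in_supported_polys]] by simp
  have "p' = 0"
  proof (rule ccontr)
    assume "p' \<noteq> 0"
    then have "p' * w \<noteq> 0" using mpoly_mult_ne_zero \<open>w \<noteq> 0\<close> by blast
    then obtain x where x: "x \<in> Poly_Mapping.keys (p' * w)" by (metis keys_eq_empty all_not_in_conv)
    then obtain b k where bk: "x = b + k" "b \<in> Poly_Mapping.keys p'" "k \<in> Poly_Mapping.keys w"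
      using keys_mult[of p' w] by blast
    have "x \<in> E" using p'w x by (auto simp: supported_polys_def)
    then have "b \<in> F" using shift[OF bk(3)] bk(1) by simp
    then show False using bk(2) by (simp add: p'_def keys_restrict_keys)
  qed
  then show "p \<in> supported_polys F" unfolding p'_def restrict_keys_compl_eq_0_iff .
qed

lemma prime_ideal_supported_polys_var_exps:
  "prime_ideal (supported_polys (var_exps A) :: ('v::finite, 'a::field) mpoly set)"
  (is "prime_ideal (supported_polys ?F)")
proof -
  have up: "upward_closed ?F" by (fastforce simp: upward_closed_def mem_var_exps_iff lookup_add)
  have shift: "c + k \<in> ?F \<longleftrightarrow> c \<in> ?F" if "k \<notin> ?F" for c k
    using that by (simp add: mem_var_exps_iff lookup_add)
  have "b \<in> supported_polys ?F"
    if ab: "a * b \<in> supported_polys ?F" and "a \<notin> supported_polys ?F" for a b :: "('v, 'a) mpoly"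
  proof -
    define a' where "a' = restrict_keys (- ?F) a"
    have "a' \<noteq> 0" using \<open>a \<notin> supported_polys ?F\<close> by (simp add: a'_def restrict_keys_compl_eq_0_iff)
    have "b * a' = a * b - b * restrict_keys ?F a"
      by (simp add: a'_def restrict_keys_compl right_diff_distrib mult.commute)
    then have "b * a' \<in> supported_polys ?F"
      using supported_polys_diff[OF ab mult_in_supported_polys[OF up restrict_keys_in_supported_polys]]
      by simp
    moreover have "c + k \<in> ?F \<longleftrightarrow> c \<in> ?F" if "k \<in> Poly_Mapping.keys a'" for c k
      using that shift by (simp add: a'_def keys_restrict_keys)
    ultimately show "b \<in> supported_polys ?F"
      using mult_in_supported_polys_iff[where p = b and w = a' and E = ?F and F = ?F] \<open>a' \<noteq> 0\<close> by blast
  qed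
  moreover have "1 \<notin> supported_polys ?F" by (simp add: supported_polys_def mem_var_exps_iff)
  ultimately show ?thesis using is_ideal_supported_polys[OF up] unfolding prime_ideal_def by blast
qed

lemma prime_colon_if_uniform_keys:
  fixes w :: "('v::finite, 'a::field) mpoly"
  assumes "w \<noteq> 0"
    and "\<And>b k. k \<in> Poly_Mapping.keys w \<Longrightarrow> b + k \<in> E \<longleftrightarrow> b \<in> var_exps A"
  shows "prime_ideal (colon (supported_polys E) w)"
proof -
  have "colon (supported_polys E) w = supported_polys (var_exps A)"
    using mult_in_supported_polys_iff[OF assms] by (auto simp: colon_def)
  then show ?thesis using prime_ideal_supported_polys_var_exps by simp
qed

lemma colon_supported_polys_restrict_keys:
  assumes "upward_closed E"
  shows "colon (supported_polys E) w = colon (supported_polys E) (restrict_keys (- E) w)"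
  by (rule colon_cong[OF is_ideal_supported_polys[OF assms]])
    (simp add: restrict_keys_compl restrict_keys_in_supported_polys)

lemma uniform_shiftE:
  fixes Z :: "'k::comm_monoid_add set"
  assumes up: "upward_closed E" and "finite Z" and "\<not> Z \<subseteq> E"
  obtains c where "\<exists>a\<in>Z. a + c \<notin> E"
    and "\<And>a a' b. a \<in> Z \<Longrightarrow> a' \<in> Z \<Longrightarrow> a + c \<notin> E \<Longrightarrow> a + c + b \<in> E \<Longrightarrow>
      a' + c + b \<in> E"
proof -
  define S where "S c = {a \<in> Z. a + c \<notin> E}" for c
  have "S 0 \<noteq> {}" using assms(3) by (auto simp: S_def)
  then obtain c where c: "S c \<noteq> {}" and min: "\<And>c'. S c' \<noteq> {} \<Longrightarrow> card (S c) \<le> card (S c')"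
    using ex_has_least_nat[of "\<lambda>c. S c \<noteq> {}" 0 "\<lambda>c. card (S c)"] by blast
  have mono: "S (c + b) \<subseteq> S c" for b
  proof
    fix a assume "a \<in> S (c + b)"
    then have "a \<in> Z" "a + c + b \<notin> E" by (simp_all add: S_def add.assoc)
    then show "a \<in> S c" using upward_closedD[OF up, of "a + c" b] by (auto simp: S_def)
  qed
  have fin: "finite (S c')" for c' using \<open>finite Z\<close> by (simp add: S_def)
  show thesis
  proof (rule that)
    show "\<exists>a\<in>Z. a + c \<notin> E" using c by (auto simp: S_def)
    fix a a' b assume "a \<in> Z" "a' \<in> Z" "a + c \<notin> E" "a + c + b \<in> E"
    show "a' + c + b \<in> E"
    proof (rule ccontr)
      assume "a' + c + b \<notin> E"
      then have "a' \<in> S (c + b)" using \<open>a' \<in> Z\<close> by (simp add: S_def add.assoc)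
      then have "card (S c) \<le> card (S (c + b))" using min by blast
      then have "card (S (c + b)) = card (S c)" using card_mono[OF fin mono[of b]] by simp
      then have "S (c + b) = S c" by (rule card_subset_eq[OF fin mono])
      moreover have "a \<in> S c" using \<open>a \<in> Z\<close> \<open>a + c \<notin> E\<close> by (simp add: S_def)
      ultimately have "a \<in> S (c + b)" by simp
      then have "a + c + b \<notin> E" by (simp add: S_def add.assoc)
      then show False using \<open>a + c + b \<in> E\<close> by simp
    qed
  qed
qed

lemma var_exps_subset_colon_exps:
  assumes "upward_closed E"
  shows "var_exps {i. d + Poly_Mapping.single i 1 \<in> E} \<subseteq> {b. d + b \<in> E}"
proof
  fix b assume "b \<in> var_exps {i. d + Poly_Mapping.single i 1 \<in> E}"
  then obtain i where "d + Poly_Mapping.single i 1 \<in> E" and b_i: "0 < Poly_Mapping.lookup b i"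
    by (auto simp: mem_var_exps_iff)
  then have "d + Poly_Mapping.single i 1 + (b - Poly_Mapping.single i 1) \<in> E"
    using upward_closedD[OF assms] by blast
  then show "b \<in> {b. d + b \<in> E}" using single_add_diff_eq[OF b_i] by (simp add: add.assoc)
qed

lemma colon_exps_eq_var_exps:
  fixes d :: "'v::finite \<Rightarrow>\<^sub>0 nat"
  assumes up: "upward_closed E" and "d \<notin> E"
    and max: "\<And>b. d + b \<notin> E \<Longrightarrow>
      card {i. d + b + Poly_Mapping.single i 1 \<in> E} \<le> card {i. d + Poly_Mapping.single i 1 \<in> E}"
  shows "{b. d + b \<in> E} = var_exps {i. d + Poly_Mapping.single i 1 \<in> E}"
    (is "_ = var_exps ?A")
proof -
  have "b \<in> var_exps ?A" if "d + b \<in> E" for b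
    using that
  proof (induction "mon_deg b" arbitrary: b rule: less_induct)
    case less
    show ?case
    proof (rule ccontr)
      assume "b \<notin> var_exps ?A"
      have "b \<noteq> 0" using less.prems \<open>d \<notin> E\<close> by auto
      then obtain j b' where b: "b = Poly_Mapping.single j 1 + b'" by (rule nonzero_expsE)
      have "j \<notin> ?A" using \<open>b \<notin> var_exps ?A\<close> b by (auto simp: mem_var_exps_iff lookup_add)
      have "b' \<notin> var_exps ?A" using \<open>b \<notin> var_exps ?A\<close> b by (auto simp: mem_var_exps_iff lookup_add)
      moreover have "mon_deg b' < mon_deg b" using b by (simp add: mon_deg_add)
      ultimately have "d + b' \<notin> E" using less.hyps by blast
      have "d + b' + Poly_Mapping.single j 1 \<in> E" using less.prems b by (simp add: ac_simps)
      moreover have "d + b' + Poly_Mapping.single i 1 \<in> E" if "i \<in> ?A" for i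
        using upward_closedD[OF up, of "d + Poly_Mapping.single i 1" b'] that by (simp add: ac_simps)
      ultimately have "insert j ?A \<subseteq> {i. d + b' + Poly_Mapping.single i 1 \<in> E}" by blast
      then have "card (insert j ?A) \<le> card {i. d + b' + Poly_Mapping.single i 1 \<in> E}"
        by (rule card_mono[OF finite])
      then have "card ?A < card {i. d + b' + Poly_Mapping.single i 1 \<in> E}"
        using \<open>j \<notin> ?A\<close> by simp
      then show False using max[OF \<open>d + b' \<notin> E\<close>] by simp
    qed
  qed
  then show ?thesis using var_exps_subset_colon_exps[OF up, of d] by blast
qed

lemma colon_exps_var_expsE:
  fixes d0 :: "'v::finite \<Rightarrow>\<^sub>0 nat"
  assumes up: "upward_closed E" and "d0 \<notin> E"
  obtains d A where "d0 + d \<notin> E" and "{b. d0 + d + b \<in> E} = var_exps A"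
proof -
  let ?vars = "\<lambda>d. card {i. d0 + d + Poly_Mapping.single i 1 \<in> E}"
  have "?vars d < Suc (card (UNIV :: 'v set))" for d
    by (simp add: card_mono le_imp_less_Suc)
  then obtain d where d: "d0 + d \<notin> E" and max: "\<And>d'. d0 + d' \<notin> E \<Longrightarrow> ?vars d' \<le> ?vars d"
    using Lattices_Big.ex_has_greatest_nat[of "\<lambda>d. d0 + d \<notin> E" 0 ?vars "Suc (card (UNIV :: 'v set))"]
      \<open>d0 \<notin> E\<close>
    by auto
  have "{b. d0 + d + b \<in> E} = var_exps {i. d0 + d + Poly_Mapping.single i 1 \<in> E}"
  proof (rule colon_exps_eq_var_exps[OF up d])
    fix b assume "d0 + d + b \<notin> E"
    then show "card {i. d0 + d + b + Poly_Mapping.single i 1 \<in> E}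
        \<le> card {i. d0 + d + Poly_Mapping.single i 1 \<in> E}"
      using max[of "d + b"] by (simp add: add.assoc)
  qed
  with d show thesis by (rule that)
qed

lemma prime_colon_monomial_multipleE:
  fixes z :: "('v::finite, 'a::field) mpoly"
  assumes up: "upward_closed E" and "z \<notin> supported_polys E"
  obtains c where "prime_ideal (colon (supported_polys E) (z * monomial_poly c))"
proof -
  have "\<not> Poly_Mapping.keys z \<subseteq> E" using assms(2) by (simp add: supported_polys_def)
  then obtain c where "\<exists>a\<in>Poly_Mapping.keys z. a + c \<notin> E"
    and uniform: "\<And>a a' b. a \<in> Poly_Mapping.keys z \<Longrightarrow> a' \<in> Poly_Mapping.keys z \<Longrightarrow>
      a + c \<notin> E \<Longrightarrow> a + c + b \<in> E \<Longrightarrow> a' + c + b \<in> E"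
    by (rule uniform_shiftE[OF up finite_keys]) blast
  then obtain a0 where a0: "a0 \<in> Poly_Mapping.keys z" "a0 + c \<notin> E" by blast
  obtain d A where d: "a0 + c + d \<notin> E"
    and colon_d: "{b. a0 + c + d + b \<in> E} = var_exps A"
    by (rule colon_exps_var_expsE[OF up a0(2)])
  define w where "w = z * monomial_poly (c + d)"
  define w' where "w' = restrict_keys (- E) w"
  have "a0 + (c + d) \<in> Poly_Mapping.keys w'"
    using a0 d by (simp add: w'_def w_def keys_restrict_keys keys_mult_monomial_poly add.assoc)
  then have "w' \<noteq> 0" by auto
  moreover have "b + k \<in> E \<longleftrightarrow> b \<in> var_exps A" if "k \<in> Poly_Mapping.keys w'" for b k
  proof -
    from that obtain a where a: "a \<in> Poly_Mapping.keys z" "k = a + (c + d)" "k \<notin> E"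
      by (auto simp: w'_def w_def keys_restrict_keys keys_mult_monomial_poly)
    then have "a + c \<notin> E" using upward_closedD[OF up, of "a + c" d] by (auto simp: add.assoc)
    then have "a + c + (d + b) \<in> E \<longleftrightarrow> a0 + c + (d + b) \<in> E"
      using uniform[OF a(1) a0(1)] uniform[OF a0(1) a(1) a0(2)] by blast
    moreover have "b + k = a + c + (d + b)" "a0 + c + d + b = a0 + c + (d + b)"
      using a(2) by (simp_all add: ac_simps)
    moreover have "a0 + c + d + b \<in> E \<longleftrightarrow> b \<in> var_exps A"
      using colon_d[THEN eqset_imp_iff, of b] by simp
    ultimately show ?thesis by simp
  qed
  ultimately have "prime_ideal (colon (supported_polys E) w')"
    by (rule prime_colon_if_uniform_keys)
  then have "prime_ideal (colon (supported_polys E) w)"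
    using colon_supported_polys_restrict_keys[OF up, of w] by (simp add: w'_def)
  then show thesis unfolding w_def by (rule that)
qed

section \<open>v-numbers\<close>

lemma v_number_eq_Least: "v_number J = (LEAST k. \<exists>g. homog k g \<and> prime_ideal (colon J g))"
proof -
  have "(\<exists>g P. homog k g \<and> P \<in> Ass J \<and> colon J g = P)
      \<longleftrightarrow> (\<exists>g. homog k g \<and> prime_ideal (colon J g))" for k
    by (auto simp: Ass_def)
  then show ?thesis unfolding v_number_def by simp
qed

lemma v_number_eqI:
  assumes "homog k g" and "prime_ideal (colon J g)"
    and "\<And>k' g'. homog k' g' \<Longrightarrow> prime_ideal (colon J g') \<Longrightarrow> k \<le> k'"
  shows "v_number J = k"
  unfolding v_number_eq_Least using assms by (intro Least_equality) blast+

lemma v_number_witnessE: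
  assumes "homog k g" and "prime_ideal (colon J g)"
  obtains g' where "homog (v_number J) g'" and "prime_ideal (colon J g')"
  using LeastI_ex[of "\<lambda>k. \<exists>g. homog k g \<and> prime_ideal (colon J g)"] assms
  unfolding v_number_eq_Least by blast

lemma prime_ideal_variableE:
  fixes P :: "('v::finite, 'a::field) mpoly set"
  assumes prime: "prime_ideal P" and "monomial_poly c \<in> P"
  obtains i where "monomial_poly (Poly_Mapping.single i 1) \<in> P"
proof -
  have "\<exists>i. monomial_poly (Poly_Mapping.single i 1) \<in> P"
    using assms(2)
  proof (induction "mon_deg c" arbitrary: c)
    case 0
    then have "(1 :: ('v, 'a) mpoly) \<in> P" by (simp add: mon_deg_eq_0_iff monomial_poly_def)
    then have "r \<in> P" for r using is_ideal_mult_left[of P 1 r] prime by (simp add: prime_ideal_def)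
    then show ?case using prime by (auto simp: prime_ideal_def)
  next
    case (Suc n)
    then have "c \<noteq> 0" using mon_deg_eq_0_iff[of c] by auto
    then obtain j c' where c: "c = Poly_Mapping.single j 1 + c'" by (rule nonzero_expsE)
    then have "monomial_poly (Poly_Mapping.single j 1) * monomial_poly c' \<in> P"
      using Suc.prems by (simp add: monomial_poly_add)
    then have "monomial_poly (Poly_Mapping.single j 1) \<in> P \<or> monomial_poly c' \<in> P"
      using prime by (simp add: prime_ideal_def)
    moreover have "n = mon_deg c'" using Suc.hyps(2) c by (simp add: mon_deg_add)
    ultimately show ?case using Suc.hyps(1) by blast
  qed
  then show thesis using that by blast
qed

lemma prime_colon_witness_degree_ge:
  fixes g :: "('v::finite, 'a::field) mpoly"
  assumes up: "upward_closed E" and "E \<noteq> {}" and deg: "\<And>a. a \<in> E \<Longrightarrow> D \<le> mon_deg a"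
    and "homog k g" and prime: "prime_ideal (colon (supported_polys E) g)"
  shows "D \<le> k + 1"
proof -
  let ?J = "supported_polys E :: ('v, 'a) mpoly set"
  obtain c where "c \<in> E" using \<open>E \<noteq> {}\<close> by blast
  then have "monomial_poly c \<in> colon ?J g"
    using subset_colon[OF is_ideal_supported_polys[OF up], of g] by auto
  then obtain i where "monomial_poly (Poly_Mapping.single i 1) \<in> colon ?J g"
    by (rule prime_ideal_variableE[OF prime])
  then have xg: "monomial_poly (Poly_Mapping.single i 1) * g \<in> ?J" by (simp add: colon_def)
  have "g \<noteq> 0"
  proof
    assume "g = 0"
    then have "colon ?J g = UNIV" by (simp add: colon_def)
    with prime show False by (simp add: prime_ideal_def)
  qed
  then have "monomial_poly (Poly_Mapping.single i 1) * g \<noteq> 0" by (simp add: mpoly_mult_ne_zero)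
  moreover have "homog (1 + k) (monomial_poly (Poly_Mapping.single i 1) * g)"
    using homog_mult[OF homog_monomial_poly[of "Poly_Mapping.single i 1"] \<open>homog k g\<close>] by simp
  ultimately obtain a where "a \<in> E" "mon_deg a = 1 + k"
    by (rule homog_supported_polysE[OF xg])
  then show ?thesis using deg by fastforce
qed

lemma v_number_supported_polys_eq:
  fixes h :: "('v::finite, 'a::field) mpoly"
  assumes up: "upward_closed E" and "E \<noteq> {}" and deg: "\<And>a. a \<in> E \<Longrightarrow> D \<le> mon_deg a"
    and "h \<noteq> 0" and "homog e h" and D: "e + v_number (colon (supported_polys E) h) + 1 = D"
  shows "v_number (supported_polys E :: ('v, 'a) mpoly set) = D - 1"
proof -
  let ?J = "supported_polys E :: ('v, 'a) mpoly set"
  have "h \<notin> ?J"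
  proof
    assume "h \<in> ?J"
    then obtain a where "a \<in> E" "mon_deg a = e"
      using \<open>h \<noteq> 0\<close> \<open>homog e h\<close> by (rule homog_supported_polysE)
    then show False using deg D by fastforce
  qed
  (* J : h has an associated prime, so the v-number of J : h is attained. *)
  then obtain c where "prime_ideal (colon ?J (h * monomial_poly c))"
    by (rule prime_colon_monomial_multipleE[OF up])
  then have "prime_ideal (colon (colon ?J h) (monomial_poly c))" by (simp add: colon_colon)
  then obtain g where g: "homog (v_number (colon ?J h)) g" "prime_ideal (colon (colon ?J h) g)"
    by (rule v_number_witnessE[OF homog_monomial_poly])
  show ?thesis
  proof (rule v_number_eqI)
    show "homog (D - 1) (h * g)" using homog_mult[OF \<open>homog e h\<close> g(1)] by (simp flip: D)
    show "prime_ideal (colon ?J (h * g))" using g(2) by (simp add: colon_colon)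
    fix k g' assume "homog k g'" and "prime_ideal (colon ?J g')"
    then show "D - 1 \<le> k" using prime_colon_witness_degree_ge[OF up \<open>E \<noteq> {}\<close> deg] by fastforce
  qed
qed

lemma v_number_ideal_pow_eq:
  fixes f :: "('v::finite, 'a::field) mpoly"
  assumes up: "upward_closed E" and "E \<noteq> {}" and deg: "\<And>a. a \<in> E \<Longrightarrow> d \<le> mon_deg a"
    and "0 < d" and "f \<noteq> 0" and "homog d f"
    and "v_number (colon (supported_polys (exps_pow E (n + 1))) (f ^ n)) = d - 1"
  shows "v_number (supported_polys (exps_pow E (n + 1)) :: ('v, 'a) mpoly set) = (n + 1) * d - 1"
proof (rule v_number_supported_polys_eq[OF upward_closed_exps_pow[OF up] exps_pow_nonempty])
  show "E \<noteq> {}" by fact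
  show "(n + 1) * d \<le> mon_deg a" if "a \<in> exps_pow E (n + 1)" for a
    using mon_deg_exps_pow[OF deg that] .
  show "f ^ n \<noteq> 0" using \<open>f \<noteq> 0\<close> by (rule mpoly_pow_ne_zero)
  show "homog (n * d) (f ^ n)" using \<open>homog d f\<close> by (rule homog_pow)
  show "n * d + v_number (colon (supported_polys (exps_pow E (n + 1))) (f ^ n)) + 1 = (n + 1) * d"
    using assms(7) \<open>0 < d\<close> by simp
qed

theorem corollary4p9:
  fixes I :: "('v::finite, 'a::field) mpoly set" and f :: "('v, 'a) mpoly"
  assumes "monomial_ideal I" and "I \<noteq> {0}" and "I \<noteq> UNIV"
    and "f \<in> I" and "f \<noteq> 0" and "homog (alpha I) f"
    and "\<exists>N. \<forall>n\<ge>N. v_number (colon (ideal_pow I (n + 1)) (f ^ n)) = alpha I - 1"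
  shows "\<exists>N. \<forall>n\<ge>N. v_number (ideal_pow I (n + 1)) = (n + 1) * alpha I - 1"
proof -
  obtain E where up: "upward_closed E" and I: "I = supported_polys E"
    using assms(1) by (rule monomial_ideal_supported_polysE)
  have J: "ideal_pow I m = supported_polys (exps_pow E m)" for m
    unfolding I by (rule ideal_pow_supported_polys[OF up])
  have "E \<noteq> {}" using assms(4,5) I by (auto simp: supported_polys_def)
  have deg: "alpha I \<le> mon_deg a" if "a \<in> E" for a
    unfolding I using that by (rule alpha_le_mon_deg)
  have "0 < alpha I"
    using assms(3-6) unfolding I by (rule homog_supported_polys_degree_pos[OF up])
  obtain N where N: "\<And>n. N \<le> n \<Longrightarrow> v_number (colon (ideal_pow I (n + 1)) (f ^ n)) = alpha I - 1"
    using assms(7) by blast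
  have "v_number (ideal_pow I (n + 1)) = (n + 1) * alpha I - 1" if "N \<le> n" for n
    using v_number_ideal_pow_eq[OF up \<open>E \<noteq> {}\<close> deg \<open>0 < alpha I\<close> assms(5,6)] N[OF that]
    unfolding J by blast
  then show ?thesis by blast
qed

end
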